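(* Let $p>2$ be prime, $\mathcal{C}$ a $\mathbb{Z}_p\mathbb{Z}_{p^2}$-additive code and $C=\Phi(\mathcal{C})$. If $\mathbf{x}_1,\ldots,\mathbf{x}_n\in\mathcal{C}$ satisfy $\Phi(\mathbf{x}_1)+\Phi(\mathbf{x}_2)+\cdots+\Phi(\mathbf{x}_n)\in K(C)$, then $\Phi(\mathbf{x}_1+\mathbf{x}_2+\cdots+\mathbf{x}_n)\in K(C)$.
   Context: A $\mathbb{Z}_p\mathbb{Z}_{p^2}$-additive code is a subgroup $\mathcal{C}$ of $\mathbb{Z}_p^\alpha\times\mathbb{Z}_{p^2}^\beta$. The Gray map $\phi:\mathbb{Z}_{p^2}\to\mathbb{Z}_p^p$ is $\phi(\theta)=\theta''(1,\ldots,1)+\theta'(0,1,\ldots,p-1)$ with $\theta=\theta''p+\theta'$, $\theta',\theta''\in\{0,\ldots,p-1\}$, and $\Phi(\mathbf{x},\mathbf{y})=(\mathbf{x},\phi(y_1),\ldots,\phi(y_\beta))$. For $C\subseteq\mathbb{Z}_p^n$, $K(C)=\{\mathbf{x}\in\mathbb{Z}_p^n\mid C+\mathbf{x}=C\}$. *)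

theory Defs
  imports Main "HOL-Computational_Algebra.Primes"
begin

(* Vectors over Z_m of length n: functions nat => int with entries in {0..m-1}
   at indices < n and 0 elsewhere. *)
definition vec_space :: "int \<Rightarrow> nat \<Rightarrow> (nat \<Rightarrow> int) set" where
  "vec_space m n = {v. \<forall>j. (j < n \<longrightarrow> 0 \<le> v j \<and> v j < m) \<and> (n \<le> j \<longrightarrow> v j = 0)}"

definition vadd :: "int \<Rightarrow> (nat \<Rightarrow> int) \<Rightarrow> (nat \<Rightarrow> int) \<Rightarrow> (nat \<Rightarrow> int)" where
  "vadd m u v = (\<lambda>j. (u j + v j) mod m)"

definition vneg :: "int \<Rightarrow> (nat \<Rightarrow> int) \<Rightarrow> (nat \<Rightarrow> int)" where
  "vneg m u = (\<lambda>j. (- u j) mod m)"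

definition mixed_space :: "int \<Rightarrow> nat \<Rightarrow> nat \<Rightarrow> ((nat \<Rightarrow> int) \<times> (nat \<Rightarrow> int)) set" where
  "mixed_space p \<alpha> \<beta> = vec_space p \<alpha> \<times> vec_space (p^2) \<beta>"

definition madd :: "int \<Rightarrow> ((nat \<Rightarrow> int) \<times> (nat \<Rightarrow> int)) \<Rightarrow> ((nat \<Rightarrow> int) \<times> (nat \<Rightarrow> int))
                     \<Rightarrow> ((nat \<Rightarrow> int) \<times> (nat \<Rightarrow> int))" where
  "madd p a b = (vadd p (fst a) (fst b), vadd (p^2) (snd a) (snd b))"

definition mneg :: "int \<Rightarrow> ((nat \<Rightarrow> int) \<times> (nat \<Rightarrow> int)) \<Rightarrow> ((nat \<Rightarrow> int) \<times> (nat \<Rightarrow> int))" where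
  "mneg p a = (vneg p (fst a), vneg (p^2) (snd a))"

definition additive_code :: "int \<Rightarrow> nat \<Rightarrow> nat \<Rightarrow> ((nat \<Rightarrow> int) \<times> (nat \<Rightarrow> int)) set \<Rightarrow> bool" where
  "additive_code p \<alpha> \<beta> C \<longleftrightarrow> C \<subseteq> mixed_space p \<alpha> \<beta> \<and> (\<lambda>_. 0, \<lambda>_. 0) \<in> C \<and>
     (\<forall>a\<in>C. \<forall>b\<in>C. madd p a b \<in> C) \<and> (\<forall>a\<in>C. mneg p a \<in> C)"

definition msum :: "int \<Rightarrow> (nat \<Rightarrow> (nat \<Rightarrow> int) \<times> (nat \<Rightarrow> int)) \<Rightarrow> nat \<Rightarrow> ((nat \<Rightarrow> int) \<times> (nat \<Rightarrow> int))" where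
  "msum p x n = ((\<lambda>j. (\<Sum>i=1..n. fst (x i) j) mod p), (\<lambda>j. (\<Sum>i=1..n. snd (x i) j) mod (p^2)))"

definition vsum :: "int \<Rightarrow> (nat \<Rightarrow> nat \<Rightarrow> int) \<Rightarrow> nat \<Rightarrow> (nat \<Rightarrow> int)" where
  "vsum p v n = (\<lambda>j. (\<Sum>i=1..n. v i j) mod p)"

(* Gray map phi : Z_{p^2} -> Z_p^p, theta = theta'' p + theta',
   phi(theta) = theta''(1,...,1) + theta'(0,1,...,p-1); k-th coordinate, 0 <= k < p *)
definition gray :: "int \<Rightarrow> int \<Rightarrow> nat \<Rightarrow> int" where
  "gray p \<theta> k = ((\<theta> div p) + (\<theta> mod p) * int k) mod p"

(* Phi(x,y) = (x, phi(y_1), ..., phi(y_beta)) in Z_p^(alpha + p beta) *)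
definition Gray_map :: "int \<Rightarrow> nat \<Rightarrow> nat \<Rightarrow> ((nat \<Rightarrow> int) \<times> (nat \<Rightarrow> int)) \<Rightarrow> (nat \<Rightarrow> int)" where
  "Gray_map p \<alpha> \<beta> c = (\<lambda>j. if j < \<alpha> then fst c j
      else if j < \<alpha> + nat p * \<beta> then gray p (snd c ((j - \<alpha>) div nat p)) ((j - \<alpha>) mod nat p)
      else 0)"

definition kernel :: "int \<Rightarrow> nat \<Rightarrow> (nat \<Rightarrow> int) set \<Rightarrow> (nat \<Rightarrow> int) set" where
  "kernel p N C = {v \<in> vec_space p N. (\<lambda>c. vadd p c v) ` C = C}"

end

theory Submission
  imports Defs
begin

text \<open>
  Let z = x_1 + ... + x_n and s = \<Phi>(x_1) + ... + \<Phi>(x_n). Since s \<in> K(C) and \<Phi>(z) \<in> C, we have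
  \<Phi>(z) = \<Phi>(u) + s for some u \<in> \<C>. Coordinatewise, \<Phi>(z) - s vanishes on the Z_p part, and on
  the p coordinates coming from one Z_{p^2} coordinate it is the same constant, the carry of the
  sum of the \<theta>' parts. A Gray image \<phi>(\<theta>) is constant only if p divides \<theta>, so u lies in
  p (Z_p^\<alpha> \<times> Z_{p^2}^\<beta>) = {0}^\<alpha> \<times> (p Z_{p^2})^\<beta>, and translation by such u commutes with \<Phi>.
  Hence \<Phi>(u) \<in> K(C), and \<Phi>(z) \<in> K(C) because K(C) is closed under addition.
\<close>

lemma gray_mod_square:
  assumes "p > 0"
  shows "gray p (x mod p^2) k = gray p x k"
proof -
  have "x mod p^2 = p * (x div p mod p) + x mod p"
    using zmod_zmult2_eq[of p x p] assms by (simp add: power2_eq_square)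
  then have "(x mod p^2) div p = x div p mod p" and "(x mod p^2) mod p = x mod p"
    using assms by simp_all
  then show ?thesis
    unfolding gray_def by (simp add: mod_add_left_eq)
qed

lemma gray_add_multiple:
  assumes "p > 0" and "p dvd t"
  shows "gray p ((x + t) mod p^2) k = (gray p x k + gray p t k) mod p"
proof -
  from \<open>p dvd t\<close> obtain q where t: "t = p * q" by blast
  have gray_t: "gray p t k = q mod p"
    unfolding gray_def t using assms(1) by simp
  have "gray p (x + t) k = (x div p + x mod p * int k + q) mod p"
    unfolding gray_def t using assms(1) by (simp add: algebra_simps)
  also have "\<dots> = (gray p x k + gray p t k) mod p"
    unfolding gray_t by (simp add: gray_def mod_simps)
  finally show ?thesis
    using gray_mod_square[OF assms(1)] by simp
qed

lemma gray_sum_carry: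
  assumes "p > 0"
  shows "(gray p ((\<Sum>i\<in>I. y i) mod p^2) k - (\<Sum>i\<in>I. gray p (y i) k)) mod p
         = ((\<Sum>i\<in>I. y i mod p) div p) mod p"
proof -
  define A where "A = (\<Sum>i\<in>I. y i div p)"
  define B where "B = (\<Sum>i\<in>I. y i mod p)"
  have sum: "(\<Sum>i\<in>I. y i) = p * A + B"
    unfolding A_def B_def sum_distrib_left sum.distrib[symmetric] by simp
  have "(\<Sum>i\<in>I. gray p (y i) k) mod p = (\<Sum>i\<in>I. y i div p + y i mod p * int k) mod p"
    unfolding gray_def by (simp add: mod_sum_eq)
  also have "\<dots> = (A + B * int k) mod p"
    unfolding A_def B_def by (simp add: sum.distrib sum_distrib_right)
  finally have grays: "(\<Sum>i\<in>I. gray p (y i) k) mod p = (A + B * int k) mod p" .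
  have gray_sum: "gray p (p * A + B) k = (A + B div p + B mod p * int k) mod p"
    unfolding gray_def using assms by simp
  have "(gray p ((\<Sum>i\<in>I. y i) mod p^2) k - (\<Sum>i\<in>I. gray p (y i) k)) mod p
      = (gray p (p * A + B) k mod p - (\<Sum>i\<in>I. gray p (y i) k) mod p) mod p"
    unfolding gray_mod_square[OF assms] sum by (simp add: mod_diff_eq)
  also have "\<dots> = ((A + B div p + B mod p * int k) - (A + B * int k)) mod p"
    unfolding gray_sum grays by (simp add: mod_diff_eq)
  also have "(A + B div p + B mod p * int k) - (A + B * int k) = B div p - (B - B mod p) * int k"
    by (simp add: algebra_simps)
  also have "\<dots> = B div p + p * (- (B div p) * int k)"
    by (simp add: minus_mod_eq_mult_div)
  also have "(B div p + p * (- (B div p) * int k)) mod p = B div p mod p"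
    by (rule mod_mult_self2)
  finally show ?thesis
    unfolding B_def by simp
qed

lemma gray_0_eq_gray_1_iff: "gray p t 0 = gray p t 1 \<longleftrightarrow> p dvd t"
  unfolding gray_def by (simp add: mod_eq_dvd_iff dvd_mod_iff)

lemma vec_space_bounds:
  assumes "v \<in> vec_space m n" and "m > 0"
  shows "0 \<le> v j \<and> v j < m"
  using assms unfolding vec_space_def by (cases "j < n") auto

lemma vadd_assoc: "vadd m u (vadd m v w) = vadd m (vadd m u v) w"
  unfolding vadd_def by (simp add: mod_simps add.assoc)

lemma vadd_in_vec_space:
  assumes "u \<in> vec_space m n" and "v \<in> vec_space m n" and "m > 0"
  shows "vadd m u v \<in> vec_space m n"
  using assms unfolding vec_space_def vadd_def by simp

lemma vadd_cancel_right:
  assumes "v \<in> vec_space m n" and "m > 0"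
  shows "(vadd m v w j - w j) mod m = v j"
  using vec_space_bounds[OF assms, of j] unfolding vadd_def by (simp add: mod_diff_left_eq)

lemma vadd_vneg_cancel:
  assumes "v \<in> vec_space m n" and "m > 0"
  shows "vadd m (vadd m v (vneg m u)) u = v"
proof
  fix j
  have "vadd m (vadd m v (vneg m u)) u j = v j mod m"
    unfolding vadd_def vneg_def by (simp add: mod_simps)
  then show "vadd m (vadd m v (vneg m u)) u j = v j"
    using vec_space_bounds[OF assms, of j] by simp
qed

lemma kernel_vadd:
  assumes "u \<in> kernel p N S" and "v \<in> kernel p N S" and "p > 0"
  shows "vadd p u v \<in> kernel p N S"
proof -
  have "(\<lambda>c. vadd p c (vadd p u v)) ` S = (\<lambda>c. vadd p c v) ` (\<lambda>c. vadd p c u) ` S"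
    by (simp add: image_image vadd_assoc)
  also have "\<dots> = S"
    using assms(1,2) unfolding kernel_def by simp
  finally show ?thesis
    using assms unfolding kernel_def by (simp add: vadd_in_vec_space)
qed

lemma msum_Suc: "msum p x (Suc n) = madd p (msum p x n) (x (Suc n))"
  unfolding msum_def madd_def vadd_def by (simp add: mod_add_left_eq)

lemma additive_code_msum:
  assumes "additive_code p \<alpha> \<beta> C" and "\<forall>i\<in>{1..n}. x i \<in> C"
  shows "msum p x n \<in> C"
  using assms(2)
proof (induction n)
  case 0
  then show ?case
    using assms(1) unfolding additive_code_def msum_def by simp
next
  case (Suc n)
  then show ?case
    using assms(1) unfolding additive_code_def msum_Suc by simp
qed

lemma additive_code_translate:
  assumes "additive_code p \<alpha> \<beta> C" and "u \<in> C" and "p > 0"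
  shows "(\<lambda>v. madd p v u) ` C = C"
proof
  show "(\<lambda>v. madd p v u) ` C \<subseteq> C"
    using assms(1,2) unfolding additive_code_def by auto
next
  show "C \<subseteq> (\<lambda>v. madd p v u) ` C"
  proof
    fix v
    assume "v \<in> C"
    then have "v \<in> mixed_space p \<alpha> \<beta>" and "madd p v (mneg p u) \<in> C"
      using assms(1,2) unfolding additive_code_def by auto
    moreover have "madd p (madd p v (mneg p u)) u = v"
      using calculation(1) assms(3) vadd_vneg_cancel[of "fst v" p \<alpha>] vadd_vneg_cancel[of "snd v" "p^2" \<beta>]
      unfolding madd_def mneg_def mixed_space_def by auto
    ultimately show "v \<in> (\<lambda>v. madd p v u) ` C"
      by (metis image_eqI)
  qed
qed

lemma Gray_map_less: "j < \<alpha> \<Longrightarrow> Gray_map p \<alpha> \<beta> c j = fst c j"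
  unfolding Gray_map_def by simp

lemma Gray_map_beyond: "\<alpha> + nat p * \<beta> \<le> j \<Longrightarrow> Gray_map p \<alpha> \<beta> c j = 0"
  unfolding Gray_map_def by simp

lemma Gray_map_block:
  assumes "b < \<beta>" and "k < nat p"
  shows "Gray_map p \<alpha> \<beta> c (\<alpha> + nat p * b + k) = gray p (snd c b) k"
proof -
  have "nat p * b + k < nat p * Suc b"
    using assms(2) by simp
  also have "\<dots> \<le> nat p * \<beta>"
    using assms(1) by (intro mult_le_mono2) simp
  finally show ?thesis
    using assms(2) unfolding Gray_map_def by simp
qed

lemma Gray_map_index_cases:
  obtains (fst) "j < \<alpha>"
    | (block) b k where "b < \<beta>" and "k < nat p" and "j = \<alpha> + nat p * b + k"
    | (beyond) "\<alpha> + nat p * \<beta> \<le> j"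
proof (cases "j < \<alpha> \<or> \<alpha> + nat p * \<beta> \<le> j")
  case True
  then show ?thesis using that(1,3) by blast
next
  case False
  then have "j - \<alpha> < \<beta> * nat p"
    by (simp add: mult.commute) arith
  then have "(j - \<alpha>) div nat p < \<beta>" and "nat p \<noteq> 0"
    by (auto simp: less_mult_imp_div_less)
  moreover from \<open>nat p \<noteq> 0\<close> have "(j - \<alpha>) mod nat p < nat p"
    by simp
  moreover have "j = \<alpha> + nat p * ((j - \<alpha>) div nat p) + (j - \<alpha>) mod nat p"
    using False by simp
  ultimately show ?thesis
    using that(2) by blast
qed

lemma Gray_map_in_vec_space:
  assumes "c \<in> mixed_space p \<alpha> \<beta>" and "p > 0"
  shows "Gray_map p \<alpha> \<beta> c \<in> vec_space p (\<alpha> + nat p * \<beta>)"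
  using assms unfolding mixed_space_def vec_space_def Gray_map_def gray_def by auto

definition p_multiples :: "int \<Rightarrow> nat \<Rightarrow> ((nat \<Rightarrow> int) \<times> (nat \<Rightarrow> int)) set" where
  "p_multiples p \<beta> = {u. fst u = (\<lambda>_. 0) \<and> (\<forall>b<\<beta>. p dvd snd u b)}"

lemma Gray_map_madd_p_multiple:
  assumes "v \<in> mixed_space p \<alpha> \<beta>" and "u \<in> p_multiples p \<beta>" and "p > 0"
  shows "Gray_map p \<alpha> \<beta> (madd p v u) = vadd p (Gray_map p \<alpha> \<beta> v) (Gray_map p \<alpha> \<beta> u)"
proof
  fix j
  show "Gray_map p \<alpha> \<beta> (madd p v u) j = vadd p (Gray_map p \<alpha> \<beta> v) (Gray_map p \<alpha> \<beta> u) j"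
  proof (cases rule: Gray_map_index_cases[where j = j and \<alpha> = \<alpha> and \<beta> = \<beta> and p = p])
    case fst
    then show ?thesis
      using assms vec_space_bounds[of "fst v" p \<alpha> j]
      by (simp add: Gray_map_less madd_def vadd_def mixed_space_def p_multiples_def)
  next
    case (block b k)
    then have "p dvd snd u b"
      using assms(2) unfolding p_multiples_def by simp
    then show ?thesis
      using block assms(3) gray_add_multiple[of p "snd u b" "snd v b" k]
      by (simp add: Gray_map_block madd_def vadd_def)
  next
    case beyond
    then show ?thesis
      by (simp add: Gray_map_beyond vadd_def)
  qed
qed

lemma Gray_map_p_multiple_in_kernel:
  assumes "additive_code p \<alpha> \<beta> C" and "u \<in> C" and "u \<in> p_multiples p \<beta>" and "p > 0"
  shows "Gray_map p \<alpha> \<beta> u \<in> kernel p (\<alpha> + nat p * \<beta>) (Gray_map p \<alpha> \<beta> ` C)"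
proof -
  have C: "C \<subseteq> mixed_space p \<alpha> \<beta>"
    using assms(1) unfolding additive_code_def by simp
  have "(\<lambda>c. vadd p c (Gray_map p \<alpha> \<beta> u)) ` Gray_map p \<alpha> \<beta> ` C
      = Gray_map p \<alpha> \<beta> ` (\<lambda>v. madd p v u) ` C"
    unfolding image_image
    by (rule image_cong[OF refl]) (use C assms(3,4) in \<open>auto simp: Gray_map_madd_p_multiple\<close>)
  also have "\<dots> = Gray_map p \<alpha> \<beta> ` C"
    using additive_code_translate[OF assms(1,2,4)] by simp
  finally show ?thesis
    using C assms(2,4) Gray_map_in_vec_space unfolding kernel_def by blast
qed

lemma p_multiple_if_Gray_map_blocks_constant:
  assumes "u \<in> mixed_space p \<alpha> \<beta>" and "p > 1"
    and "\<forall>j<\<alpha>. Gray_map p \<alpha> \<beta> u j = 0"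
    and "\<forall>b<\<beta>. Gray_map p \<alpha> \<beta> u (\<alpha> + nat p * b) = Gray_map p \<alpha> \<beta> u (\<alpha> + nat p * b + 1)"
  shows "u \<in> p_multiples p \<beta>"
proof -
  have "fst u j = 0" for j
    using assms(1,3) Gray_map_less[of j \<alpha> p \<beta> u]
    unfolding mixed_space_def vec_space_def by (cases "j < \<alpha>") auto
  moreover have "p dvd snd u b" if "b < \<beta>" for b
    using that assms(2,4) Gray_map_block[OF that, of 0 p \<alpha> u] Gray_map_block[OF that, of 1 p \<alpha> u]
    by (simp add: gray_0_eq_gray_1_iff[symmetric])
  ultimately show ?thesis
    unfolding p_multiples_def by auto
qed

lemma Gray_map_msum_less:
  "j < \<alpha> \<Longrightarrow> Gray_map p \<alpha> \<beta> (msum p x n) j = vsum p (\<lambda>i. Gray_map p \<alpha> \<beta> (x i)) n j"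
  by (simp add: Gray_map_less msum_def vsum_def)

lemma Gray_map_msum_block:
  assumes "p > 0" and "b < \<beta>" and "k < nat p"
  shows "(Gray_map p \<alpha> \<beta> (msum p x n) (\<alpha> + nat p * b + k)
           - vsum p (\<lambda>i. Gray_map p \<alpha> \<beta> (x i)) n (\<alpha> + nat p * b + k)) mod p
         = ((\<Sum>i=1..n. snd (x i) b mod p) div p) mod p"
  using gray_sum_carry[OF assms(1)]
  by (simp add: Gray_map_block[OF assms(2,3)] msum_def vsum_def mod_diff_right_eq)

theorem lemma10:
  fixes p :: int and \<alpha> \<beta> n :: nat
    and \<C> :: "((nat \<Rightarrow> int) \<times> (nat \<Rightarrow> int)) set"
    and x :: "nat \<Rightarrow> (nat \<Rightarrow> int) \<times> (nat \<Rightarrow> int)"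
  assumes "prime p" and "p > 2"
    and "additive_code p \<alpha> \<beta> \<C>"
    and "\<forall>i\<in>{1..n}. x i \<in> \<C>"
    and "vsum p (\<lambda>i. Gray_map p \<alpha> \<beta> (x i)) n
           \<in> kernel p (\<alpha> + nat p * \<beta>) (Gray_map p \<alpha> \<beta> ` \<C>)"
  shows "Gray_map p \<alpha> \<beta> (msum p x n) \<in> kernel p (\<alpha> + nat p * \<beta>) (Gray_map p \<alpha> \<beta> ` \<C>)"
proof -
  let ?\<Phi> = "Gray_map p \<alpha> \<beta>"
  define s where "s = vsum p (\<lambda>i. ?\<Phi> (x i)) n"
  have p: "p > 1"
    using assms(2) by simp
  have C: "\<C> \<subseteq> mixed_space p \<alpha> \<beta>"
    using assms(3) unfolding additive_code_def by simp
  have "?\<Phi> (msum p x n) \<in> (\<lambda>c. vadd p c s) ` ?\<Phi> ` \<C>"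
    using additive_code_msum[OF assms(3,4)] assms(5) unfolding s_def kernel_def by simp
  then obtain u where "u \<in> \<C>" and sum: "?\<Phi> (msum p x n) = vadd p (?\<Phi> u) s"
    by auto
  have "?\<Phi> u \<in> vec_space p (\<alpha> + nat p * \<beta>)"
    using Gray_map_in_vec_space[of u p \<alpha> \<beta>] C \<open>u \<in> \<C>\<close> p by auto
  then have u_coord: "?\<Phi> u j = (?\<Phi> (msum p x n) j - s j) mod p" for j
    unfolding sum using vadd_cancel_right p by simp
  have "u \<in> p_multiples p \<beta>"
  proof (rule p_multiple_if_Gray_map_blocks_constant)
    show "\<forall>j<\<alpha>. ?\<Phi> u j = 0"
      using u_coord Gray_map_msum_less unfolding s_def by simp
    show "\<forall>b<\<beta>. ?\<Phi> u (\<alpha> + nat p * b) = ?\<Phi> u (\<alpha> + nat p * b + 1)"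
      using u_coord Gray_map_msum_block[of p _ \<beta> 0] Gray_map_msum_block[of p _ \<beta> 1] p
      unfolding s_def by simp
  qed (use C \<open>u \<in> \<C>\<close> p in auto)
  then have "?\<Phi> u \<in> kernel p (\<alpha> + nat p * \<beta>) (?\<Phi> ` \<C>)"
    using Gray_map_p_multiple_in_kernel assms(3) \<open>u \<in> \<C>\<close> p by simp
  then show ?thesis
    unfolding sum using kernel_vadd assms(5) p unfolding s_def by simp
qed

end
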